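(* Let $\mathbb{T}$ be a time scale, $I\subseteq\mathbb{R}$ an interval, $I_{\mathbb{T}}:=I\cap\mathbb{T}$, $t_0\in I_{\mathbb{T}}$, and let $p,q$ be real-valued right-dense continuous functions. Let $p_1,q_1\ge0$ be constants with $|p(t)|\le p_1$ and $|q(t)|\le q_1$ for all $t\in I_{\mathbb{T}}^{\kappa^2}$ with $t\ge t_0$, and set $k_1:=1+p_1+q_1$. If $y$ is any solution on $I_{\mathbb{T}}$ of $$y^{\Delta\Delta}(t)+p(t)y^{\Delta}(t)+q(t)y(t)=0,$$ then $$\|y(t)\|_2\le \|y(t_0)\|_2\, e_{k_1}(t,t_0)\qquad\text{for all } t\in I_{\mathbb{T}},\ t\ge t_0,$$ where $\|y(t)\|_2:=\big((y(t))^2+(y^\Delta(t))^2\big)^{1/2}$.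
   Context: A time scale $\mathbb{T}$ is a nonempty closed subset of $\mathbb{R}$; $\sigma(t):=\inf\{s\in\mathbb{T}:s>t\}$, $\mu(t):=\sigma(t)-t$, $y^\sigma=y\circ\sigma$, delta derivative $y^\Delta(t):=\lim_{s\to t}\frac{y^\sigma(t)-y(s)}{\sigma(t)-s}$, $y^{\Delta\Delta}=(y^\Delta)^\Delta$; $\mathbb{T}^{\kappa^2}$ denotes $\mathbb{T}$ with up to two left-scattered maximal points removed (iterating $\mathbb{T}^\kappa$). For a right-dense continuous $\ell$ with $1+\mu\ell\neq0$, $e_\ell(\cdot,t_0)$ is the unique solution of $\phi^\Delta=\ell\phi$, $\phi(t_0)=1$. *)

theory Defs
  imports "HOL-Analysis.Analysis"
begin

text \<open>Basic time-scale notions, relative to a set S of reals (a time scale or a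
restriction I \<inter> T of one). Conventions: inf of the empty set is sup S, sup of the
empty set is inf S, i.e. sigma(max S) = max S and rho(min S) = min S.\<close>

definition ts_sigma :: "real set \<Rightarrow> real \<Rightarrow> real" where
  "ts_sigma S t = (if \<exists>s\<in>S. s > t then Inf {s\<in>S. s > t} else t)"

definition ts_rho :: "real set \<Rightarrow> real \<Rightarrow> real" where
  "ts_rho S t = (if \<exists>s\<in>S. s < t then Sup {s\<in>S. s < t} else t)"

definition ts_mu :: "real set \<Rightarrow> real \<Rightarrow> real" where
  "ts_mu S t = ts_sigma S t - t"

definition right_dense :: "real set \<Rightarrow> real \<Rightarrow> bool" where
  "right_dense S t \<longleftrightarrow> (\<exists>s\<in>S. s > t) \<and> ts_sigma S t = t"

definition left_dense :: "real set \<Rightarrow> real \<Rightarrow> bool" where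
  "left_dense S t \<longleftrightarrow> (\<exists>s\<in>S. s < t) \<and> ts_rho S t = t"

definition left_scattered :: "real set \<Rightarrow> real \<Rightarrow> bool" where
  "left_scattered S t \<longleftrightarrow> ts_rho S t < t"

definition ts_kappa :: "real set \<Rightarrow> real set" where
  "ts_kappa S = (if \<exists>m\<in>S. (\<forall>s\<in>S. s \<le> m) \<and> left_scattered S m
                 then S - {m. m \<in> S \<and> (\<forall>s\<in>S. s \<le> m) \<and> left_scattered S m} else S)"

definition has_delta_derivative :: "real set \<Rightarrow> (real \<Rightarrow> real) \<Rightarrow> real \<Rightarrow> real \<Rightarrow> bool" where
  "has_delta_derivative S f D t \<longleftrightarrow>
     (\<forall>\<epsilon>>0. \<exists>\<delta>>0. \<forall>s\<in>S. \<bar>s - t\<bar> < \<delta> \<longrightarrow>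
        \<bar>f (ts_sigma S t) - f s - D * (ts_sigma S t - s)\<bar> \<le> \<epsilon> * \<bar>ts_sigma S t - s\<bar>)"

definition rd_continuous_on :: "real set \<Rightarrow> (real \<Rightarrow> real) \<Rightarrow> bool" where
  "rd_continuous_on S f \<longleftrightarrow>
     (\<forall>t\<in>S. (right_dense S t \<longrightarrow> continuous (at t within S) f) \<and>
            (left_dense S t \<longrightarrow> (\<exists>L. (f \<longlongrightarrow> L) (at t within {s\<in>S. s < t}))))"

definition time_scale :: "real set \<Rightarrow> bool" where
  "time_scale T \<longleftrightarrow> T \<noteq> {} \<and> closed T"

definition ts_exp :: "real set \<Rightarrow> (real \<Rightarrow> real) \<Rightarrow> real \<Rightarrow> real \<Rightarrow> real" where
  "ts_exp T l t0 = (THE \<phi>. \<phi> t0 = 1 \<and>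
      (\<forall>t\<in>ts_kappa T. has_delta_derivative T \<phi> (l t * \<phi> t) t) \<and>
      (\<forall>t. t \<notin> T \<longrightarrow> \<phi> t = 0))"

end

theory Submission
  imports Defs
begin

(*
  Let N(t) = sqrt (y(t)^2 + y^Delta(t)^2) and k = 1 + p1 + q1. At a right-scattered point the
  equation gives (y, y^Delta)(sigma t) = (y, y^Delta)(t) + mu(t) (y^Delta, - p y^Delta - q y)(t),
  hence N(sigma t) <= (1 + k mu(t)) N(t), which is exactly how e_k(., t0) grows across the jump;
  at right-dense points the same estimate holds up to o(s - t). So N / e_k is nonincreasing on
  [t0, t], by the induction principle for closed subsets of the reals (successor steps, right
  limits, left limits).

  For constant k >= 0 the exponential is constructed explicitly: exp (k (t - t0)) corrected by
  the sum of k mu - ln (1 + k mu) over the right-scattered points between t0 and t. The same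
  comparison argument, applied to psi / e_k and -psi / e_k, shows that every solution psi of
  psi^Delta = k psi, psi(t0) = 1 equals it; so it is the exponential e_k(., t0), which the
  statement defines by this uniqueness.
*)

section \<open>Induction on closed sets of reals\<close>

lemma closed_predecessor:
  fixes K :: "real set"
  assumes "closed K" "a \<in> K" "c \<in> K" "a < c" "c \<notin> closure (K \<inter> {..<c})"
  obtains m where "m \<in> K" "m < c" "\<forall>r\<in>K. m < r \<longrightarrow> c \<le> r"
proof
  define A where "A = K \<inter> {..<c}"
  have A: "A \<noteq> {}" "bdd_above A" using assms A_def by (auto intro!: bdd_aboveI[of _ c])
  have "Sup A \<in> closure A" using A by (rule closure_contains_Sup)
  moreover have "closure A \<subseteq> K" using assms(1) A_def by (intro closure_minimal) auto
  ultimately show "Sup A \<in> K" by auto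
  have "Sup A \<le> c" using A(1) by (intro cSup_least) (auto simp: A_def)
  moreover have "Sup A \<noteq> c" using \<open>Sup A \<in> closure A\<close> assms(5) A_def by auto
  ultimately show "Sup A < c" by simp
  show "\<forall>r\<in>K. Sup A < r \<longrightarrow> c \<le> r"
    using cSup_upper[OF _ A(2)] by (force simp: A_def)
qed

lemma closed_induction [consumes 3, case_names start successor right_limit left_limit]:
  fixes K :: "real set"
  assumes "closed K" and "a \<in> K" and "K \<subseteq> {a..}"
    and start: "P a"
    and successor: "\<And>t s. t \<in> K \<Longrightarrow> s \<in> K \<Longrightarrow> t < s \<Longrightarrow> \<forall>r\<in>K. t < r \<longrightarrow> s \<le> r \<Longrightarrow>
        P t \<Longrightarrow> P s"
    and right_limit: "\<And>t. t \<in> K \<Longrightarrow> t \<in> closure (K \<inter> {t<..}) \<Longrightarrow> P t \<Longrightarrow>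
        \<exists>\<delta>>0. \<forall>s\<in>K. t < s \<and> s < t + \<delta> \<longrightarrow> P s"
    and left_limit: "\<And>t. t \<in> K \<Longrightarrow> a < t \<Longrightarrow> t \<in> closure (K \<inter> {..<t}) \<Longrightarrow>
        \<forall>s\<in>K. s < t \<longrightarrow> P s \<Longrightarrow> P t"
  shows "\<forall>t\<in>K. P t"
proof (rule ccontr)
  assume "\<not> (\<forall>t\<in>K. P t)"
  define B where "B = {t\<in>K. \<not> P t}"
  have B: "B \<noteq> {}" "bdd_below B"
    using \<open>\<not> (\<forall>t\<in>K. P t)\<close> assms(3) by (auto simp: B_def intro!: bdd_belowI[of _ a])
  define c where "c = Inf B"
  have "c \<in> closure B" unfolding c_def using B by (rule closure_contains_Inf)
  moreover have "closure B \<subseteq> K" using assms(1) B_def by (intro closure_minimal) auto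
  ultimately have "c \<in> K" by auto
  have below: "\<forall>s\<in>K. s < c \<longrightarrow> P s"
    using cInf_lower[OF _ B(2)] by (force simp: B_def c_def)
  have "P c"
  proof -
    consider "c = a" | "a < c" "c \<in> closure (K \<inter> {..<c})" | "a < c" "c \<notin> closure (K \<inter> {..<c})"
      using \<open>c \<in> K\<close> assms(3) by force
    then show ?thesis
    proof cases
      case 3
      then obtain m where "m \<in> K" "m < c" "\<forall>r\<in>K. m < r \<longrightarrow> c \<le> r"
        using closed_predecessor[OF assms(1,2) \<open>c \<in> K\<close>] by blast
      then show ?thesis using successor[OF _ \<open>c \<in> K\<close>] below by blast
    qed (use start left_limit \<open>c \<in> K\<close> below in auto)
  qed
  obtain \<delta> where "\<delta> > 0" and right: "\<forall>s\<in>K. c < s \<and> s < c + \<delta> \<longrightarrow> P s"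
  proof (cases "c \<in> closure (K \<inter> {c<..})")
    case False
    then obtain e where "e > 0" "\<forall>s\<in>K \<inter> {c<..}. \<not> dist s c < e"
      unfolding closure_approachable by auto
    then show ?thesis by (intro that[of e]) (force simp: dist_real_def)+
  qed (use right_limit \<open>c \<in> K\<close> \<open>P c\<close> in blast)
  have "c + \<delta> \<le> Inf B"
  proof (rule cInf_greatest[OF B(1)])
    fix s assume "s \<in> B"
    then have "c \<le> s" "s \<noteq> c" "s \<in> K" "\<not> P s"
      using cInf_lower[OF _ B(2)] \<open>P c\<close> by (auto simp: B_def c_def)
    then show "c + \<delta> \<le> s" using right by force
  qed
  then show False using \<open>\<delta> > 0\<close> by (simp add: c_def)
qed

lemma closed_induction_antimono:
  fixes K :: "real set" and u :: "real \<Rightarrow> real"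
  assumes "closed K" and "a \<in> K" and "b \<in> K" and "K \<subseteq> {a..}"
    and successor: "\<And>t s. t \<in> K \<Longrightarrow> s \<in> K \<Longrightarrow> t < s \<Longrightarrow> \<forall>r\<in>K. t < r \<longrightarrow> s \<le> r \<Longrightarrow>
        u s \<le> u t"
    and right_limit: "\<And>t \<epsilon>. t \<in> K \<Longrightarrow> t \<in> closure (K \<inter> {t<..}) \<Longrightarrow> \<epsilon> > 0 \<Longrightarrow>
        \<exists>\<delta>>0. \<forall>s\<in>K. t < s \<and> s < t + \<delta> \<longrightarrow> u s \<le> u t + \<epsilon> * (s - t)"
    and left_limit: "\<And>t. t \<in> K \<Longrightarrow> a < t \<Longrightarrow> t \<in> closure (K \<inter> {..<t}) \<Longrightarrow>
        (u \<longlongrightarrow> u t) (at t within K \<inter> {..<t})"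
  shows "u b \<le> u a"
proof -
  have linear_bound: "u t \<le> u a + \<epsilon> * (t - a)" if "\<epsilon> > 0" "t \<in> K" for \<epsilon> t
  proof -
    have "\<forall>t\<in>K. u t \<le> u a + \<epsilon> * (t - a)"
      using assms(1,2,4)
    proof (induction rule: closed_induction)
      case (successor t s)
      have "\<epsilon> * (t - a) \<le> \<epsilon> * (s - a)" using \<open>t < s\<close> \<open>\<epsilon> > 0\<close> by simp
      then show ?case using successor assms(5)[of t s] by linarith
    next
      case (right_limit t)
      then obtain \<delta> where "\<delta> > 0" "\<forall>s\<in>K. t < s \<and> s < t + \<delta> \<longrightarrow> u s \<le> u t + \<epsilon> * (s - t)"
        using assms(6) \<open>\<epsilon> > 0\<close> by blast
      then show ?case using right_limit(3) by (force simp: algebra_simps)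
    next
      case (left_limit t)
      then have "t islimpt (K \<inter> {..<t})" by (simp add: islimpt_in_closure)
      then have "at t within K \<inter> {..<t} \<noteq> bot" by (simp add: trivial_limit_within)
      moreover have "((\<lambda>r. u a + \<epsilon> * (r - a)) \<longlongrightarrow> u a + \<epsilon> * (t - a)) (at t within K \<inter> {..<t})"
        by (intro tendsto_intros)
      moreover have "(u \<longlongrightarrow> u t) (at t within K \<inter> {..<t})"
        using assms(7) left_limit by blast
      moreover have "eventually (\<lambda>r. u r \<le> u a + \<epsilon> * (r - a)) (at t within K \<inter> {..<t})"
        unfolding eventually_at using left_limit by (auto intro!: exI[of _ 1])
      ultimately show ?case by (rule tendsto_le)
    qed simp
    then show ?thesis using that(2) by blast
  qed
  have "b - a \<ge> 0" using assms(3,4) by auto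
  show ?thesis
  proof (rule field_le_epsilon)
    fix e :: real assume "e > 0"
    then have "u b \<le> u a + e / (b - a + 1) * (b - a)"
      using \<open>b - a \<ge> 0\<close> by (intro linear_bound assms(3) divide_pos_pos) auto
    also have "e / (b - a + 1) * (b - a) \<le> e"
      using \<open>e > 0\<close> \<open>b - a \<ge> 0\<close> by (simp add: field_simps)
    finally show "u b \<le> u a + e" by simp
  qed
qed

section \<open>Jump operator and delta derivatives\<close>

lemma ts_sigma_ge: "t \<le> ts_sigma S t"
  unfolding ts_sigma_def by (auto intro!: cInf_greatest)

lemma ts_sigma_le: "s \<in> S \<Longrightarrow> t < s \<Longrightarrow> ts_sigma S t \<le> s"
  unfolding ts_sigma_def by (auto intro!: cInf_lower bdd_belowI[of _ t])

lemma ts_sigma_eq_successor: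
  "s \<in> S \<Longrightarrow> t < s \<Longrightarrow> \<forall>r\<in>S. t < r \<longrightarrow> s \<le> r \<Longrightarrow> ts_sigma S t = s"
  unfolding ts_sigma_def by (auto intro!: cInf_eq_minimum)

lemma ts_sigma_mem:
  assumes "closed S" and "t < ts_sigma S t"
  shows "ts_sigma S t \<in> S"
proof -
  define A where "A = {s\<in>S. s > t}"
  have "A \<noteq> {}" using assms(2) by (auto simp: A_def ts_sigma_def split: if_splits)
  moreover have "bdd_below A" by (auto simp: A_def intro!: bdd_belowI[of _ t])
  ultimately have "Inf A \<in> closure A" by (rule closure_contains_Inf)
  moreover have "closure A \<subseteq> S" using assms(1) A_def by (intro closure_minimal) auto
  ultimately show ?thesis using \<open>A \<noteq> {}\<close> unfolding ts_sigma_def A_def by auto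
qed

lemma ts_sigma_slice_successor:
  assumes "K = S \<inter> {a..b}" and "t \<in> K" "s \<in> K" "t < s" "\<forall>r\<in>K. t < r \<longrightarrow> s \<le> r"
  shows "ts_sigma S t = s"
proof (rule ts_sigma_eq_successor)
  show "s \<in> S" "t < s" using assms by auto
  show "\<forall>r\<in>S. t < r \<longrightarrow> s \<le> r"
  proof (intro ballI impI)
    fix r assume "r \<in> S" "t < r"
    show "s \<le> r"
    proof (cases "r \<le> b")
      case True
      then have "r \<in> K" using \<open>r \<in> S\<close> \<open>t < r\<close> assms(1,2) by auto
      then show ?thesis using \<open>t < r\<close> assms(5) by blast
    qed (use assms(1,3) in auto)
  qed
qed

lemma ts_sigma_slice_right_limit:
  fixes t :: real
  assumes "K = S \<inter> {a..b}" and "t \<in> closure (K \<inter> {t<..})"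
  shows "ts_sigma S t = t"
proof (rule antisym[OF field_le_epsilon ts_sigma_ge])
  fix e :: real assume "e > 0"
  then obtain r where "r \<in> K \<inter> {t<..}" "dist r t < e"
    using assms(2) unfolding closure_approachable by blast
  then show "ts_sigma S t \<le> t + e"
    using ts_sigma_le[of r S t] assms(1) by (auto simp: dist_real_def)
qed

lemma ts_kappa_subset: "ts_kappa S \<subseteq> S"
  unfolding ts_kappa_def by auto

lemma ts_kappa_if_less: "r \<in> S \<Longrightarrow> s \<in> S \<Longrightarrow> r < s \<Longrightarrow> r \<in> ts_kappa S"
  unfolding ts_kappa_def by force

lemma ts_kappa_if_left_limit:
  assumes "t \<in> S" and "K \<subseteq> S" and "t \<in> closure (K \<inter> {..<t})"
  shows "t \<in> ts_kappa S"
proof -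
  define C where "C = {s\<in>S. s < t}"
  obtain r0 where "r0 \<in> K" "r0 < t"
    using assms(3) zero_less_one unfolding closure_approachable by blast
  then have C: "C \<noteq> {}" "bdd_above C"
    using assms(2) by (auto simp: C_def intro!: bdd_aboveI[of _ t])
  have "Sup C = t"
  proof (rule antisym)
    show "Sup C \<le> t" using C(1) by (intro cSup_least) (auto simp: C_def)
    show "t \<le> Sup C"
    proof (rule field_le_epsilon)
      fix e :: real assume "e > 0"
      then obtain r where "r \<in> K" "r < t" "dist r t < e"
        using assms(3) unfolding closure_approachable by blast
      moreover have "r \<le> Sup C" using \<open>r \<in> K\<close> \<open>r < t\<close> assms(2) C(2)
        by (intro cSup_upper) (auto simp: C_def)
      ultimately show "t \<le> Sup C + e" by (auto simp: dist_real_def)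
    qed
  qed
  then have "\<not> left_scattered S t"
    using C(1) unfolding left_scattered_def ts_rho_def C_def by auto
  then show ?thesis using assms(1) unfolding ts_kappa_def by auto
qed

lemma has_delta_derivative_at_sigma:
  assumes "has_delta_derivative S f D t" and "t \<in> S"
  shows "f (ts_sigma S t) = f t + D * (ts_sigma S t - t)"
proof -
  let ?\<mu> = "ts_sigma S t - t"
  have "\<bar>f (ts_sigma S t) - f t - D * ?\<mu>\<bar> \<le> 0"
  proof (rule field_le_epsilon)
    fix e :: real assume "e > 0"
    have "?\<mu> \<ge> 0" using ts_sigma_ge[of t S] by simp
    then have "e / (?\<mu> + 1) > 0" using \<open>e > 0\<close> by simp
    then have "\<bar>f (ts_sigma S t) - f t - D * ?\<mu>\<bar> \<le> e / (?\<mu> + 1) * \<bar>?\<mu>\<bar>"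
      using assms unfolding has_delta_derivative_def by fastforce
    also have "\<dots> \<le> e" using \<open>?\<mu> \<ge> 0\<close> \<open>e > 0\<close> by (simp add: field_simps)
    finally show "\<bar>f (ts_sigma S t) - f t - D * ?\<mu>\<bar> \<le> 0 + e" by simp
  qed
  then show ?thesis by simp
qed

lemma has_delta_derivative_right_dense:
  assumes "has_delta_derivative S f D t" and "ts_sigma S t = t" and "\<epsilon> > 0"
  shows "\<exists>\<delta>>0. \<forall>s\<in>S. \<bar>s - t\<bar> < \<delta> \<longrightarrow> \<bar>f s - f t - D * (s - t)\<bar> \<le> \<epsilon> * \<bar>s - t\<bar>"
proof -
  have "\<bar>f t - f s - D * (t - s)\<bar> = \<bar>f s - f t - D * (s - t)\<bar>" for s
    by (simp add: abs_minus_commute algebra_simps)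
  then show ?thesis
    using assms unfolding has_delta_derivative_def by (simp add: abs_minus_commute)
qed

lemma has_delta_derivative_imp_tendsto:
  assumes der: "has_delta_derivative S f D t" and "t \<in> S"
  shows "(f \<longlongrightarrow> f t) (at t within S)"
proof (rule tendstoI)
  fix e :: real assume "e > 0"
  define \<mu> where "\<mu> = ts_sigma S t - t"
  have "\<mu> \<ge> 0" using ts_sigma_ge[of t S] by (simp add: \<mu>_def)
  define \<eta> where "\<eta> = e / (4 * (\<mu> + 1))"
  have "\<eta> > 0" using \<open>e > 0\<close> \<open>\<mu> \<ge> 0\<close> by (simp add: \<eta>_def)
  then obtain \<delta> where "\<delta> > 0" and \<delta>: "\<forall>s\<in>S. \<bar>s - t\<bar> < \<delta> \<longrightarrow>
      \<bar>f (ts_sigma S t) - f s - D * (ts_sigma S t - s)\<bar> \<le> \<eta> * \<bar>ts_sigma S t - s\<bar>"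
    using der unfolding has_delta_derivative_def by blast
  have f_sigma: "f (ts_sigma S t) = f t + D * \<mu>"
    using has_delta_derivative_at_sigma[OF der \<open>t \<in> S\<close>] by (simp add: \<mu>_def)
  define \<delta>' where "\<delta>' = min \<delta> (min 1 (e / (4 * (\<bar>D\<bar> + 1))))"
  have "\<delta>' > 0" using \<open>\<delta> > 0\<close> \<open>e > 0\<close> by (simp add: \<delta>'_def)
  moreover have "dist (f s) (f t) < e" if "s \<in> S" "\<bar>s - t\<bar> < \<delta>'" for s
  proof -
    have "\<bar>f (ts_sigma S t) - f s - D * (ts_sigma S t - s)\<bar> \<le> \<eta> * \<bar>ts_sigma S t - s\<bar>"
      using \<delta> that by (simp add: \<delta>'_def)
    then have "\<bar>f t - f s - D * (t - s)\<bar> \<le> \<eta> * \<bar>\<mu> + (t - s)\<bar>"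
      using f_sigma by (simp add: \<mu>_def algebra_simps)
    also have "\<dots> \<le> \<eta> * (\<mu> + 1)"
      using that \<open>\<mu> \<ge> 0\<close> \<open>\<eta> > 0\<close> by (intro mult_left_mono) (auto simp: \<delta>'_def)
    also have "\<dots> = e / 4" using \<open>\<mu> \<ge> 0\<close> by (simp add: \<eta>_def field_simps)
    finally have linear: "\<bar>f t - f s - D * (t - s)\<bar> \<le> e / 4" .
    have "\<bar>D * (t - s)\<bar> \<le> \<bar>D\<bar> * (e / (4 * (\<bar>D\<bar> + 1)))"
      using that by (simp only: abs_mult) (intro mult_left_mono, auto simp: \<delta>'_def)
    also have "\<dots> \<le> e / 4" using \<open>e > 0\<close> by (simp add: field_simps)
    finally have "\<bar>f s - f t\<bar> \<le> e / 2" using linear by linarith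
    then show ?thesis using \<open>e > 0\<close> by (simp add: dist_real_def)
  qed
  ultimately show "eventually (\<lambda>s. dist (f s) (f t) < e) (at t within S)"
    unfolding eventually_at by (auto simp: dist_real_def)
qed

lemma has_delta_derivative_if_linear_approx:
  assumes approx: "\<And>\<epsilon>. \<epsilon> > 0 \<Longrightarrow> \<exists>\<delta>>0. \<forall>s\<in>S. \<bar>s - t\<bar> < \<delta> \<longrightarrow> \<bar>f s - f t - D * (s - t)\<bar> \<le> \<epsilon> * \<bar>s - t\<bar>"
    and jump: "t < ts_sigma S t \<Longrightarrow> f (ts_sigma S t) = f t + D * (ts_sigma S t - t)"
  shows "has_delta_derivative S f D t"
  unfolding has_delta_derivative_def
proof (intro allI impI)
  fix \<epsilon> :: real assume "\<epsilon> > 0"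
  then obtain \<delta> where "\<delta> > 0" and \<delta>: "\<forall>s\<in>S. \<bar>s - t\<bar> < \<delta> \<longrightarrow> \<bar>f s - f t - D * (s - t)\<bar> \<le> \<epsilon> * \<bar>s - t\<bar>"
    using approx by blast
  have flip: "\<bar>f t - f s - D * (t - s)\<bar> = \<bar>f s - f t - D * (s - t)\<bar>" for s
    by (simp add: abs_minus_commute algebra_simps)
  show "\<exists>\<delta>>0. \<forall>s\<in>S. \<bar>s - t\<bar> < \<delta> \<longrightarrow>
      \<bar>f (ts_sigma S t) - f s - D * (ts_sigma S t - s)\<bar> \<le> \<epsilon> * \<bar>ts_sigma S t - s\<bar>"
  proof (cases "ts_sigma S t = t")
    case True
    then show ?thesis using \<open>\<delta> > 0\<close> \<delta> flip by (metis abs_minus_commute)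
  next
    case False
    then have "t < ts_sigma S t" using ts_sigma_ge[of t S] by simp
    define \<mu> where "\<mu> = ts_sigma S t - t"
    have "\<bar>f (ts_sigma S t) - f s - D * (ts_sigma S t - s)\<bar> \<le> \<epsilon> * \<bar>ts_sigma S t - s\<bar>"
      if "s \<in> S" "\<bar>s - t\<bar> < min \<delta> \<mu>" for s
    proof -
      have "s \<le> t"
      proof (rule ccontr)
        assume "\<not> s \<le> t"
        then have "ts_sigma S t \<le> s" using ts_sigma_le[OF that(1)] by simp
        then show False using that(2) \<open>\<not> s \<le> t\<close> by (simp add: \<mu>_def abs_if)
      qed
      have "\<bar>f (ts_sigma S t) - f s - D * (ts_sigma S t - s)\<bar> = \<bar>f s - f t - D * (s - t)\<bar>"
        using jump[OF \<open>t < ts_sigma S t\<close>] flip[of s] by (simp add: algebra_simps)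
      also have "\<dots> \<le> \<epsilon> * \<bar>s - t\<bar>" using \<delta> that by simp
      also have "\<dots> \<le> \<epsilon> * \<bar>ts_sigma S t - s\<bar>"
        using \<open>s \<le> t\<close> \<open>t < ts_sigma S t\<close> \<open>\<epsilon> > 0\<close> by (intro mult_left_mono) auto
      finally show ?thesis .
    qed
    moreover have "min \<delta> \<mu> > 0" using \<open>\<delta> > 0\<close> \<open>t < ts_sigma S t\<close> by (simp add: \<mu>_def)
    ultimately show ?thesis by blast
  qed
qed

lemma has_delta_derivative_cmult:
  assumes "has_delta_derivative S f D t"
  shows "has_delta_derivative S (\<lambda>x. c * f x) (c * D) t"
  unfolding has_delta_derivative_def
proof (intro allI impI)
  fix \<epsilon> :: real assume "\<epsilon> > 0"
  then obtain \<delta> where "\<delta> > 0" and \<delta>: "\<forall>s\<in>S. \<bar>s - t\<bar> < \<delta> \<longrightarrow>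
      \<bar>f (ts_sigma S t) - f s - D * (ts_sigma S t - s)\<bar> \<le> \<epsilon> / (\<bar>c\<bar> + 1) * \<bar>ts_sigma S t - s\<bar>"
    using assms unfolding has_delta_derivative_def
    by (metis abs_ge_zero add_nonneg_pos divide_pos_pos zero_less_one)
  have "\<bar>c * f (ts_sigma S t) - c * f s - c * D * (ts_sigma S t - s)\<bar> \<le> \<epsilon> * \<bar>ts_sigma S t - s\<bar>"
    if "s \<in> S" "\<bar>s - t\<bar> < \<delta>" for s
  proof -
    have "\<bar>c * f (ts_sigma S t) - c * f s - c * D * (ts_sigma S t - s)\<bar>
        = \<bar>c\<bar> * \<bar>f (ts_sigma S t) - f s - D * (ts_sigma S t - s)\<bar>"
      by (simp add: abs_mult[symmetric] algebra_simps)
    also have "\<dots> \<le> \<bar>c\<bar> * (\<epsilon> / (\<bar>c\<bar> + 1) * \<bar>ts_sigma S t - s\<bar>)"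
      using \<delta> that by (intro mult_left_mono) auto
    also have "\<dots> \<le> \<epsilon> * \<bar>ts_sigma S t - s\<bar>"
      using \<open>\<epsilon> > 0\<close> by (simp add: field_simps mult_right_mono)
    finally show ?thesis .
  qed
  then show "\<exists>\<delta>>0. \<forall>s\<in>S. \<bar>s - t\<bar> < \<delta> \<longrightarrow> \<bar>c * f (ts_sigma S t) - c * f s - c * D * (ts_sigma S t - s)\<bar>
      \<le> \<epsilon> * \<bar>ts_sigma S t - s\<bar>"
    using \<open>\<delta> > 0\<close> by blast
qed

section \<open>Comparison with an exponential\<close>

lemma quotient_step_le:
  fixes Nt Ns et es k d \<eta> \<epsilon> :: real
  assumes "et > 0" and "k \<ge> 0" and "0 < d" and "d \<le> 1"
    and "\<eta> > 0" and "\<eta> \<le> et / 2" and "\<eta> \<le> \<epsilon> * et\<^sup>2 / (2 * (et + \<bar>Nt\<bar>))"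
    and N_step: "Ns \<le> Nt * (1 + k * d) + \<eta> * d" and e_step: "\<bar>es - et * (1 + k * d)\<bar> \<le> \<eta> * d"
  shows "Ns / es - Nt / et \<le> \<epsilon> * d"
proof -
  have "\<eta> * d \<le> \<eta>" using assms(4,5) by (simp add: mult_left_le_one_le)
  moreover have "et \<le> et * (1 + k * d)" using assms(1-3) by simp
  ultimately have "et / 2 \<le> es" using e_step assms(6) by linarith
  then have "es > 0" using assms(1) by linarith
  have "- Nt * (es - et * (1 + k * d)) \<le> \<bar>Nt\<bar> * \<bar>es - et * (1 + k * d)\<bar>"
    by (metis abs_ge_self abs_minus_cancel abs_mult mult_minus_left)
  also have "\<dots> \<le> \<bar>Nt\<bar> * (\<eta> * d)" using e_step by (intro mult_left_mono) auto
  finally have "Ns * et - Nt * es \<le> \<eta> * d * (et + \<bar>Nt\<bar>)"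
    using mult_right_mono[OF N_step, of et] assms(1) by (simp add: algebra_simps)
  then have "(Ns * et - Nt * es) / (es * et) \<le> \<eta> * d * (et + \<bar>Nt\<bar>) / (es * et)"
    using \<open>es > 0\<close> assms(1) by (intro divide_right_mono) auto
  then have "Ns / es - Nt / et \<le> \<eta> * d * (et + \<bar>Nt\<bar>) / (es * et)"
    using \<open>es > 0\<close> assms(1) by (simp add: diff_frac_eq mult.commute)
  also have "\<dots> \<le> \<eta> * d * (et + \<bar>Nt\<bar>) / (et / 2 * et)"
    using \<open>et / 2 \<le> es\<close> assms(1,3,5) by (intro divide_left_mono mult_right_mono) auto
  also have "\<dots> = d * (\<eta> * (2 * (et + \<bar>Nt\<bar>)) / et\<^sup>2)"
    using assms(1) by (simp add: field_simps power2_eq_square)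
  also have "\<dots> \<le> d * \<epsilon>"
  proof -
    have "2 * (et + \<bar>Nt\<bar>) > 0" using assms(1) by simp
    then have "\<eta> * (2 * (et + \<bar>Nt\<bar>)) \<le> \<epsilon> * et\<^sup>2"
      using assms(7) by (simp add: pos_le_divide_eq)
    then have "\<eta> * (2 * (et + \<bar>Nt\<bar>)) / et\<^sup>2 \<le> \<epsilon>" using assms(1) by (simp add: divide_le_eq)
    then show ?thesis using assms(3) by (intro mult_left_mono) auto
  qed
  finally show ?thesis by (simp add: mult.commute)
qed

lemma quotient_step_margin:
  fixes Nt et k \<epsilon> :: real
  assumes "et > 0" and "k \<ge> 0" and "\<epsilon> > 0"
  obtains \<eta> where "\<eta> > 0" and "\<And>Ns es d. 0 < d \<Longrightarrow> d \<le> 1 \<Longrightarrow> Ns \<le> Nt * (1 + k * d) + \<eta> * d \<Longrightarrow>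
      \<bar>es - et * (1 + k * d)\<bar> \<le> \<eta> * d \<Longrightarrow> Ns / es - Nt / et \<le> \<epsilon> * d"
proof -
  define \<eta> where "\<eta> = min (et / 2) (\<epsilon> * et\<^sup>2 / (2 * (et + \<bar>Nt\<bar>)))"
  have "\<epsilon> * et\<^sup>2 / (2 * (et + \<bar>Nt\<bar>)) > 0"
    using assms by (intro divide_pos_pos) (auto intro: add_pos_nonneg)
  then have "\<eta> > 0" using assms(1) by (simp add: \<eta>_def)
  moreover have "\<eta> \<le> et / 2" "\<eta> \<le> \<epsilon> * et\<^sup>2 / (2 * (et + \<bar>Nt\<bar>))"
    unfolding \<eta>_def by (rule min.cobounded1, rule min.cobounded2)
  ultimately show ?thesis using quotient_step_le[OF assms(1,2)] that by blast
qed

lemma ratio_antimono: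
  fixes K :: "real set" and N e :: "real \<Rightarrow> real" and k a b :: real
  assumes "closed K" and "a \<in> K" and "b \<in> K" and "K \<subseteq> {a..}" and "k \<ge> 0"
    and e_pos: "\<And>x. x \<in> K \<Longrightarrow> e x > 0"
    and successor: "\<And>t s. t \<in> K \<Longrightarrow> s \<in> K \<Longrightarrow> t < s \<Longrightarrow> (\<forall>r\<in>K. t < r \<longrightarrow> s \<le> r) \<Longrightarrow>
        N s \<le> N t * (1 + k * (s - t)) \<and> e s = e t * (1 + k * (s - t))"
    and right_limit: "\<And>t \<eta>. t \<in> K \<Longrightarrow> t \<in> closure (K \<inter> {t<..}) \<Longrightarrow> \<eta> > 0 \<Longrightarrow>
        \<exists>\<delta>>0. \<forall>s\<in>K. t < s \<and> s < t + \<delta> \<longrightarrow>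
          N s \<le> N t * (1 + k * (s - t)) + \<eta> * (s - t) \<and> \<bar>e s - e t * (1 + k * (s - t))\<bar> \<le> \<eta> * (s - t)"
    and left_limit: "\<And>t. t \<in> K \<Longrightarrow> a < t \<Longrightarrow> t \<in> closure (K \<inter> {..<t}) \<Longrightarrow>
        (N \<longlongrightarrow> N t) (at t within K \<inter> {..<t}) \<and> (e \<longlongrightarrow> e t) (at t within K \<inter> {..<t})"
  shows "N b / e b \<le> N a / e a"
proof (rule closed_induction_antimono[OF assms(1-4), of "\<lambda>x. N x / e x"])
  fix t s assume ts: "t \<in> K" "s \<in> K" "t < s" "\<forall>r\<in>K. t < r \<longrightarrow> s \<le> r"
  have "1 + k * (s - t) > 0" using assms(5) ts(3) by (simp add: add_pos_nonneg)
  have "N s / e s \<le> N t * (1 + k * (s - t)) / e s"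
    using successor[OF ts] e_pos[OF ts(2)] by (intro divide_right_mono) auto
  also have "\<dots> = N t / e t"
    using successor[OF ts] \<open>1 + k * (s - t) > 0\<close> e_pos[OF ts(1)] by simp
  finally show "N s / e s \<le> N t / e t" .
next
  fix t \<epsilon> :: real assume t: "t \<in> K" "t \<in> closure (K \<inter> {t<..})" and "\<epsilon> > 0"
  obtain \<eta> where "\<eta> > 0" and quotient_step: "\<And>Ns es d. 0 < d \<Longrightarrow> d \<le> 1 \<Longrightarrow>
      Ns \<le> N t * (1 + k * d) + \<eta> * d \<Longrightarrow> \<bar>es - e t * (1 + k * d)\<bar> \<le> \<eta> * d \<Longrightarrow>
      Ns / es - N t / e t \<le> \<epsilon> * d"
    using quotient_step_margin[OF e_pos[OF t(1)] assms(5) \<open>\<epsilon> > 0\<close>] by blast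
  obtain \<delta> where "\<delta> > 0" and \<delta>: "\<forall>s\<in>K. t < s \<and> s < t + \<delta> \<longrightarrow>
      N s \<le> N t * (1 + k * (s - t)) + \<eta> * (s - t) \<and> \<bar>e s - e t * (1 + k * (s - t))\<bar> \<le> \<eta> * (s - t)"
    using right_limit[OF t \<open>\<eta> > 0\<close>] by blast
  have "N s / e s \<le> N t / e t + \<epsilon> * (s - t)" if "s \<in> K" "t < s" "s < t + min \<delta> 1" for s
  proof -
    have "0 < s - t" "s - t \<le> 1" using that by auto
    moreover have "N s \<le> N t * (1 + k * (s - t)) + \<eta> * (s - t)"
      and "\<bar>e s - e t * (1 + k * (s - t))\<bar> \<le> \<eta> * (s - t)" using \<delta> that by auto
    ultimately have "N s / e s - N t / e t \<le> \<epsilon> * (s - t)" by (rule quotient_step)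
    then show ?thesis by simp
  qed
  then show "\<exists>\<delta>>0. \<forall>s\<in>K. t < s \<and> s < t + \<delta> \<longrightarrow> N s / e s \<le> N t / e t + \<epsilon> * (s - t)"
    using \<open>\<delta> > 0\<close> by (intro exI[of _ "min \<delta> 1"]) auto
next
  fix t assume t: "t \<in> K" "a < t" "t \<in> closure (K \<inter> {..<t})"
  have "e t \<noteq> 0" using e_pos[OF t(1)] by simp
  then show "((\<lambda>x. N x / e x) \<longlongrightarrow> N t / e t) (at t within K \<inter> {..<t})"
    using left_limit[OF t] by (intro tendsto_divide) auto
qed

lemma ratio_antimono_delta_exp:
  fixes T K :: "real set" and N e :: "real \<Rightarrow> real" and k a b :: real
  assumes "closed T" and K: "K = T \<inter> {a..b}" and "a \<in> T" "b \<in> T" "a \<le> b" "k \<ge> 0"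
    and e_pos: "\<And>t. t \<in> K \<Longrightarrow> e t > 0"
    and e_der: "\<And>t. t \<in> K \<Longrightarrow> has_delta_derivative T e (k * e t) t"
    and successor: "\<And>t s. t \<in> K \<Longrightarrow> s \<in> K \<Longrightarrow> t < s \<Longrightarrow> \<forall>r\<in>K. t < r \<longrightarrow> s \<le> r \<Longrightarrow>
        N s \<le> N t * (1 + k * (s - t))"
    and right_limit: "\<And>t \<eta>. t \<in> K \<Longrightarrow> t \<in> closure (K \<inter> {t<..}) \<Longrightarrow> \<eta> > 0 \<Longrightarrow>
        \<exists>\<delta>>0. \<forall>s\<in>K. t < s \<and> s < t + \<delta> \<longrightarrow> N s \<le> N t * (1 + k * (s - t)) + \<eta> * (s - t)"
    and left_limit: "\<And>t. t \<in> K \<Longrightarrow> a < t \<Longrightarrow> t \<in> closure (K \<inter> {..<t}) \<Longrightarrow>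
        (N \<longlongrightarrow> N t) (at t within K \<inter> {..<t})"
  shows "N b / e b \<le> N a / e a"
proof (rule ratio_antimono[of K a b k e N])
  show "closed K" unfolding K using \<open>closed T\<close> by (intro closed_Int) auto
  show "a \<in> K" "b \<in> K" "K \<subseteq> {a..}" using assms(3-5) K by auto
next
  fix t s assume ts: "t \<in> K" "s \<in> K" "t < s" "\<forall>r\<in>K. t < r \<longrightarrow> s \<le> r"
  have "ts_sigma T t = s" using ts_sigma_slice_successor[OF K ts] .
  then have "e s = e t * (1 + k * (s - t))"
    using has_delta_derivative_at_sigma[OF e_der[OF ts(1)]] ts(1) K
    by (auto simp: algebra_simps)
  then show "N s \<le> N t * (1 + k * (s - t)) \<and> e s = e t * (1 + k * (s - t))"
    using successor[OF ts] by simp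
next
  fix t \<eta> :: real assume t: "t \<in> K" "t \<in> closure (K \<inter> {t<..})" and "\<eta> > 0"
  obtain \<delta>1 where "\<delta>1 > 0" and N_step: "\<forall>s\<in>K. t < s \<and> s < t + \<delta>1 \<longrightarrow>
      N s \<le> N t * (1 + k * (s - t)) + \<eta> * (s - t)"
    using right_limit[OF t \<open>\<eta> > 0\<close>] by blast
  obtain \<delta>2 where "\<delta>2 > 0" and e_step: "\<forall>s\<in>T. \<bar>s - t\<bar> < \<delta>2 \<longrightarrow>
      \<bar>e s - e t - k * e t * (s - t)\<bar> \<le> \<eta> * \<bar>s - t\<bar>"
    using has_delta_derivative_right_dense[OF e_der[OF t(1)]
        ts_sigma_slice_right_limit[OF K t(2)] \<open>\<eta> > 0\<close>] by blast
  have "\<forall>s\<in>K. t < s \<and> s < t + min \<delta>1 \<delta>2 \<longrightarrow>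
      N s \<le> N t * (1 + k * (s - t)) + \<eta> * (s - t) \<and> \<bar>e s - e t * (1 + k * (s - t))\<bar> \<le> \<eta> * (s - t)"
    using N_step e_step K by (auto simp: algebra_simps)
  then show "\<exists>\<delta>>0. \<forall>s\<in>K. t < s \<and> s < t + \<delta> \<longrightarrow>
      N s \<le> N t * (1 + k * (s - t)) + \<eta> * (s - t) \<and> \<bar>e s - e t * (1 + k * (s - t))\<bar> \<le> \<eta> * (s - t)"
    using \<open>\<delta>1 > 0\<close> \<open>\<delta>2 > 0\<close> by (intro exI[of _ "min \<delta>1 \<delta>2"]) auto
next
  fix t assume t: "t \<in> K" "a < t" "t \<in> closure (K \<inter> {..<t})"
  have "(e \<longlongrightarrow> e t) (at t within K \<inter> {..<t})"
    using has_delta_derivative_imp_tendsto[OF e_der[OF t(1)]] t(1) K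
    by (auto intro: tendsto_within_subset)
  then show "(N \<longlongrightarrow> N t) (at t within K \<inter> {..<t}) \<and> (e \<longlongrightarrow> e t) (at t within K \<inter> {..<t})"
    using left_limit[OF t] by simp
qed (use e_pos \<open>k \<ge> 0\<close> in auto)

section \<open>The exponential with constant coefficient\<close>

definition right_scattered :: "real set \<Rightarrow> real set" where
  "right_scattered T = {r\<in>T. r < ts_sigma T r}"

definition jump_defect :: "real \<Rightarrow> real \<Rightarrow> real" where
  "jump_defect k m = k * m - ln (1 + k * m)"

definition jump_defect_sum :: "real set \<Rightarrow> real \<Rightarrow> real \<Rightarrow> real \<Rightarrow> real" where
  "jump_defect_sum T k a b = (\<Sum>\<^sub>\<infinity>r\<in>right_scattered T \<inter> {a..<b}. jump_defect k (ts_sigma T r - r))"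

lemma jump_defect_nonneg: "k \<ge> 0 \<Longrightarrow> m \<ge> 0 \<Longrightarrow> 0 \<le> jump_defect k m"
  unfolding jump_defect_def using ln_add_one_self_le_self[of "k * m"] by simp

lemma jump_defect_le_square:
  assumes "k \<ge> 0" and "m \<ge> 0"
  shows "jump_defect k m \<le> (k * m)\<^sup>2"
proof (cases "k * m \<le> 1")
  case True
  then show ?thesis
    using ln_one_plus_pos_lower_bound[of "k * m"] assms by (simp add: jump_defect_def)
next
  case False
  then have "k * m * 1 \<le> k * m * (k * m)" using assms by (intro mult_left_mono) auto
  then have "k * m \<le> (k * m)\<^sup>2" by (simp add: power2_eq_square)
  moreover have "0 \<le> ln (1 + k * m)" using assms by simp
  ultimately show ?thesis by (simp add: jump_defect_def)
qed

lemma sum_graininess_le: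
  assumes "finite F" and "b \<in> T" and "a \<le> b" and "F \<subseteq> right_scattered T \<inter> {a..<b}"
  shows "(\<Sum>r\<in>F. ts_sigma T r - r) \<le> b - a"
  using assms
proof (induction "card F" arbitrary: F b rule: less_induct)
  case less
  show ?case
  proof (cases "F = {}")
    case False
    define m where "m = Max F"
    have "m \<in> F" using False less.prems by (simp add: m_def)
    then have m: "m \<in> T" "a \<le> m" "m < b" "m < ts_sigma T m"
      using less.prems by (auto simp: right_scattered_def)
    have "F - {m} \<subseteq> right_scattered T \<inter> {a..<m}"
    proof
      fix r assume "r \<in> F - {m}"
      moreover have "r \<le> m" using \<open>r \<in> F - {m}\<close> less.prems(1) by (simp add: m_def)
      ultimately show "r \<in> right_scattered T \<inter> {a..<m}" using less.prems(4) by auto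
    qed
    moreover have "card (F - {m}) < card F"
      using less.prems(1) \<open>m \<in> F\<close> by (rule card_Diff1_less)
    ultimately have "(\<Sum>r\<in>F - {m}. ts_sigma T r - r) \<le> m - a"
      using less.hyps less.prems(1) m(1,2) by blast
    moreover have "ts_sigma T m \<le> b" using ts_sigma_le[of b T m] less.prems(2) m(3) by simp
    moreover have "(\<Sum>r\<in>F. ts_sigma T r - r) = (ts_sigma T m - m) + (\<Sum>r\<in>F - {m}. ts_sigma T r - r)"
      using \<open>m \<in> F\<close> less.prems(1) by (simp add: sum.remove)
    ultimately show ?thesis by simp
  qed (use less.prems(3) in simp)
qed

lemma jump_defect_finite_sum_le:
  assumes "k \<ge> 0" and "b \<in> T" and "a \<le> b" and "finite F" and "F \<subseteq> right_scattered T \<inter> {a..<b}"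
  shows "(\<Sum>r\<in>F. jump_defect k (ts_sigma T r - r)) \<le> k\<^sup>2 * (b - a)\<^sup>2"
proof -
  have "(\<Sum>r\<in>F. jump_defect k (ts_sigma T r - r)) \<le> (\<Sum>r\<in>F. k\<^sup>2 * (b - a) * (ts_sigma T r - r))"
  proof (rule sum_mono)
    fix r assume "r \<in> F"
    then have r: "r \<in> T" "a \<le> r" "r < b" using assms(5) by (auto simp: right_scattered_def)
    have "ts_sigma T r - r \<ge> 0" using ts_sigma_ge[of r T] by simp
    have "ts_sigma T r - r \<le> b - a" using ts_sigma_le[OF assms(2) r(3)] r(2) by simp
    then have "k\<^sup>2 * (ts_sigma T r - r) * (ts_sigma T r - r) \<le> k\<^sup>2 * (b - a) * (ts_sigma T r - r)"
      using \<open>ts_sigma T r - r \<ge> 0\<close> by (intro mult_right_mono mult_left_mono) auto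
    then have "(k * (ts_sigma T r - r))\<^sup>2 \<le> k\<^sup>2 * (b - a) * (ts_sigma T r - r)"
      by (simp add: power2_eq_square ac_simps)
    then show "jump_defect k (ts_sigma T r - r) \<le> k\<^sup>2 * (b - a) * (ts_sigma T r - r)"
      using jump_defect_le_square[OF assms(1) \<open>ts_sigma T r - r \<ge> 0\<close>] by linarith
  qed
  also have "\<dots> = k\<^sup>2 * (b - a) * (\<Sum>r\<in>F. ts_sigma T r - r)" by (simp add: sum_distrib_left)
  also have "\<dots> \<le> k\<^sup>2 * (b - a) * (b - a)"
    using sum_graininess_le[OF assms(4,2,3,5)] assms(3) by (intro mult_left_mono) auto
  finally show ?thesis by (simp add: power2_eq_square)
qed

lemma jump_defect_summable:
  assumes "k \<ge> 0" and "b \<in> T" and "a \<le> b"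
  shows "(\<lambda>r. jump_defect k (ts_sigma T r - r)) summable_on (right_scattered T \<inter> {a..<b})"
proof (rule nonneg_bdd_above_summable_on)
  show "0 \<le> jump_defect k (ts_sigma T r - r)" for r
    using assms(1) ts_sigma_ge[of r T] by (intro jump_defect_nonneg) auto
  show "bdd_above (sum (\<lambda>r. jump_defect k (ts_sigma T r - r)) ` {F. F \<subseteq> right_scattered T \<inter> {a..<b} \<and> finite F})"
    using jump_defect_finite_sum_le[OF assms] by (intro bdd_aboveI[of _ "k\<^sup>2 * (b - a)\<^sup>2"]) auto
qed

lemma jump_defect_sum_bounds:
  assumes "k \<ge> 0" and "b \<in> T" and "a \<le> b"
  shows "0 \<le> jump_defect_sum T k a b" and "jump_defect_sum T k a b \<le> k\<^sup>2 * (b - a)\<^sup>2"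
  unfolding jump_defect_sum_def
  using assms ts_sigma_ge jump_defect_finite_sum_le[OF assms]
  by (auto intro!: infsum_nonneg jump_defect_nonneg infsum_le_finite_sums jump_defect_summable)

lemma jump_defect_sum_split:
  assumes "k \<ge> 0" and "b \<in> T" and "c \<in> T" and "a \<le> b" and "b \<le> c"
  shows "jump_defect_sum T k a c = jump_defect_sum T k a b + jump_defect_sum T k b c"
proof -
  have "right_scattered T \<inter> {a..<c} = (right_scattered T \<inter> {a..<b}) \<union> (right_scattered T \<inter> {b..<c})"
    using assms by auto
  moreover have "(right_scattered T \<inter> {a..<b}) \<inter> (right_scattered T \<inter> {b..<c}) = {}" by auto
  ultimately show ?thesis
    unfolding jump_defect_sum_def using assms by (simp add: infsum_Un_disjoint jump_defect_summable)
qed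

lemma jump_defect_sum_single:
  assumes "r \<in> T" and "r < ts_sigma T r"
  shows "jump_defect_sum T k r (ts_sigma T r) = jump_defect k (ts_sigma T r - r)"
proof -
  have "x \<le> r" if "x \<in> right_scattered T" "x < ts_sigma T r" for x
    using ts_sigma_le[of x T r] that by (force simp: right_scattered_def)
  then have "right_scattered T \<inter> {r..<ts_sigma T r} = {r}"
    using assms by (force simp: right_scattered_def)
  then show ?thesis by (simp add: jump_defect_sum_def)
qed

definition jump_defect_from :: "real set \<Rightarrow> real \<Rightarrow> real \<Rightarrow> real \<Rightarrow> real" where
  "jump_defect_from T k t0 t =
    (if t0 \<le> t then jump_defect_sum T k t0 t else - jump_defect_sum T k t t0)"

text \<open>Along a right-scattered step the jump defect lowers \<open>exp (k \<mu>)\<close> to \<open>1 + k \<mu>\<close>; since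
  the defect over \<open>[a, b]\<close> is \<open>O((b - a)\<^sup>2)\<close>, it does not affect the derivative at right-dense points.\<close>
definition ts_exp_const :: "real set \<Rightarrow> real \<Rightarrow> real \<Rightarrow> real \<Rightarrow> real" where
  "ts_exp_const T k t0 t = (if t \<in> T then exp (k * (t - t0) - jump_defect_from T k t0 t) else 0)"

lemma jump_defect_from_diff:
  assumes "k \<ge> 0" and "t0 \<in> T" and "a \<in> T" and "b \<in> T" and "a \<le> b"
  shows "jump_defect_from T k t0 b - jump_defect_from T k t0 a = jump_defect_sum T k a b"
proof -
  consider "t0 \<le> a" | "a < t0" "t0 \<le> b" | "b < t0" by linarith
  then show ?thesis
  proof cases
    case 1
    then show ?thesis
      using jump_defect_sum_split[OF assms(1,3,4) 1 assms(5)] assms(5) by (simp add: jump_defect_from_def)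
  next
    case 2
    then show ?thesis
      using jump_defect_sum_split[OF assms(1,2,4), of a] by (simp add: jump_defect_from_def)
  next
    case 3
    then show ?thesis
      using jump_defect_sum_split[OF assms(1,4,2) assms(5)] assms(5) by (simp add: jump_defect_from_def)
  qed
qed

lemma jump_defect_from_local:
  assumes "k \<ge> 0" and "t0 \<in> T" and "s \<in> T" and "t \<in> T"
  shows "\<bar>jump_defect_from T k t0 s - jump_defect_from T k t0 t\<bar> \<le> k\<^sup>2 * (s - t)\<^sup>2"
proof (cases "t \<le> s")
  case True
  then show ?thesis
    using jump_defect_from_diff[OF assms(1,2,4,3) True] jump_defect_sum_bounds[OF assms(1,3) True] by simp
next
  case False
  then show ?thesis
    using jump_defect_from_diff[OF assms(1-4)] jump_defect_sum_bounds[OF assms(1,4), of s]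
    by (simp add: power2_commute)
qed

lemma ts_exp_const_pos: "t \<in> T \<Longrightarrow> ts_exp_const T k t0 t > 0"
  by (simp add: ts_exp_const_def)

lemma ts_exp_const_start: "t0 \<in> T \<Longrightarrow> ts_exp_const T k t0 t0 = 1"
  by (simp add: ts_exp_const_def jump_defect_from_def jump_defect_sum_def)

lemma abs_exp_minus_one_minus_le:
  fixes x :: real
  assumes "\<bar>x\<bar> \<le> 1"
  shows "\<bar>exp x - 1 - x\<bar> \<le> 3 * x\<^sup>2"
proof -
  have "\<bar>exp x - (\<Sum>i\<le>1. x ^ i / fact i)\<bar> \<le> exp \<bar>x\<bar> * (\<bar>x\<bar> ^ Suc 1) / fact 1"
    using Taylor_exp_field[of x 1] by simp
  then have "\<bar>exp x - 1 - x\<bar> \<le> exp \<bar>x\<bar> * x\<^sup>2" by (simp add: power2_eq_square algebra_simps)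
  also have "exp \<bar>x\<bar> \<le> 3" using exp_le assms by (meson exp_le_cancel_iff order_trans)
  then have "exp \<bar>x\<bar> * x\<^sup>2 \<le> 3 * x\<^sup>2" by (intro mult_right_mono) auto
  finally show ?thesis .
qed

lemma abs_exp_perturbed_linear_le:
  fixes k u h :: real
  assumes "k \<ge> 0" and "\<bar>h\<bar> \<le> k\<^sup>2 * u\<^sup>2" and "\<bar>u\<bar> \<le> 1" and "(k + k\<^sup>2) * \<bar>u\<bar> \<le> 1"
  shows "\<bar>exp (k * u - h) - 1 - k * u\<bar> \<le> (3 * (k + k\<^sup>2)\<^sup>2 + k\<^sup>2) * u\<^sup>2"
proof -
  define x where "x = k * u - h"
  have "u\<^sup>2 \<le> \<bar>u\<bar>"
    using assms(3) mult_left_le_one_le[of "\<bar>u\<bar>" "\<bar>u\<bar>"] by (simp add: power2_eq_square abs_mult[symmetric])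
  then have "\<bar>h\<bar> \<le> k\<^sup>2 * \<bar>u\<bar>"
    using assms(2) mult_left_mono[of "u\<^sup>2" "\<bar>u\<bar>" "k\<^sup>2"] by simp
  moreover have "\<bar>x\<bar> \<le> \<bar>k * u\<bar> + \<bar>h\<bar>" unfolding x_def by (rule abs_triangle_ineq4)
  moreover have "\<bar>k * u\<bar> = k * \<bar>u\<bar>" using assms(1) by (simp add: abs_mult)
  ultimately have x: "\<bar>x\<bar> \<le> (k + k\<^sup>2) * \<bar>u\<bar>" by (simp add: distrib_right)
  then have "x\<^sup>2 \<le> ((k + k\<^sup>2) * \<bar>u\<bar>)\<^sup>2"
    using power_mono[OF x abs_ge_zero, of 2] by simp
  moreover have "\<bar>exp x - 1 - x\<bar> \<le> 3 * x\<^sup>2"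
    using x assms(4) by (intro abs_exp_minus_one_minus_le) linarith
  ultimately have "\<bar>exp x - 1 - x\<bar> \<le> 3 * (k + k\<^sup>2)\<^sup>2 * u\<^sup>2"
    by (simp add: power_mult_distrib)
  moreover have "\<bar>exp x - 1 - k * u\<bar> \<le> \<bar>exp x - 1 - x\<bar> + \<bar>h\<bar>"
    unfolding x_def by linarith
  ultimately show ?thesis using assms(2) by (simp add: x_def algebra_simps)
qed

lemma ts_exp_const_local:
  assumes "k \<ge> 0" and "t0 \<in> T" and "t \<in> T" and "\<epsilon> > 0"
  shows "\<exists>\<delta>>0. \<forall>s\<in>T. \<bar>s - t\<bar> < \<delta> \<longrightarrow>
     \<bar>ts_exp_const T k t0 s - ts_exp_const T k t0 t - k * ts_exp_const T k t0 t * (s - t)\<bar> \<le> \<epsilon> * \<bar>s - t\<bar>"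
proof -
  let ?e = "ts_exp_const T k t0"
  define L where "L = k + k\<^sup>2"
  define M where "M = ?e t * (3 * L\<^sup>2 + k\<^sup>2)"
  have "?e t > 0" using ts_exp_const_pos[OF assms(3)] .
  have "L \<ge> 0" using assms(1) by (simp add: L_def)
  have "M \<ge> 0" unfolding M_def using \<open>?e t > 0\<close> by (intro mult_nonneg_nonneg) auto
  define \<delta> where "\<delta> = min 1 (min (1 / (L + 1)) (\<epsilon> / (M + 1)))"
  have "\<bar>?e s - ?e t - k * ?e t * (s - t)\<bar> \<le> \<epsilon> * \<bar>s - t\<bar>" if "s \<in> T" "\<bar>s - t\<bar> < \<delta>" for s
  proof -
    define h where "h = jump_defect_from T k t0 s - jump_defect_from T k t0 t"
    have "L * \<bar>s - t\<bar> \<le> L * (1 / (L + 1))"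
      using that(2) \<open>L \<ge> 0\<close> by (intro mult_left_mono) (auto simp: \<delta>_def)
    also have "\<dots> \<le> 1" using \<open>L \<ge> 0\<close> by simp
    finally have "\<bar>exp (k * (s - t) - h) - 1 - k * (s - t)\<bar> \<le> (3 * L\<^sup>2 + k\<^sup>2) * (s - t)\<^sup>2"
      using that(2) jump_defect_from_local[OF assms(1,2) that(1) assms(3)] assms(1)
      unfolding L_def h_def by (intro abs_exp_perturbed_linear_le) (auto simp: \<delta>_def)
    moreover have "?e s = ?e t * exp (k * (s - t) - h)"
      using that(1) assms(3) by (simp add: ts_exp_const_def h_def exp_add[symmetric] algebra_simps)
    then have "?e s - ?e t - k * ?e t * (s - t) = ?e t * (exp (k * (s - t) - h) - 1 - k * (s - t))"
      by (simp add: algebra_simps)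
    ultimately have "\<bar>?e s - ?e t - k * ?e t * (s - t)\<bar> \<le> ?e t * ((3 * L\<^sup>2 + k\<^sup>2) * (s - t)\<^sup>2)"
      using \<open>?e t > 0\<close> by (simp add: abs_mult)
    also have "\<dots> = M * \<bar>s - t\<bar> * \<bar>s - t\<bar>" by (simp add: M_def power2_eq_square)
    also have "\<dots> \<le> \<epsilon> * \<bar>s - t\<bar>"
    proof (intro mult_right_mono)
      have "M * \<bar>s - t\<bar> \<le> M * (\<epsilon> / (M + 1))"
        using that(2) \<open>M \<ge> 0\<close> by (intro mult_left_mono) (auto simp: \<delta>_def)
      also have "\<dots> \<le> \<epsilon>" using \<open>M \<ge> 0\<close> \<open>\<epsilon> > 0\<close> by (simp add: field_simps)
      finally show "M * \<bar>s - t\<bar> \<le> \<epsilon>" .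
    qed simp
    finally show ?thesis .
  qed
  moreover have "\<delta> > 0" using \<open>L \<ge> 0\<close> \<open>M \<ge> 0\<close> \<open>\<epsilon> > 0\<close> by (simp add: \<delta>_def)
  ultimately show ?thesis by blast
qed

lemma ts_exp_const_jump:
  assumes "closed T" and "k \<ge> 0" and "t0 \<in> T" and "t \<in> T" and "t < ts_sigma T t"
  shows "ts_exp_const T k t0 (ts_sigma T t) = ts_exp_const T k t0 t + k * ts_exp_const T k t0 t * (ts_sigma T t - t)"
proof -
  define \<mu> where "\<mu> = ts_sigma T t - t"
  have "ts_sigma T t \<in> T" using ts_sigma_mem[OF assms(1,5)] .
  have "jump_defect_from T k t0 (ts_sigma T t) - jump_defect_from T k t0 t = jump_defect k \<mu>"
    using jump_defect_from_diff[OF assms(2-4) \<open>ts_sigma T t \<in> T\<close>] assms(5)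
      jump_defect_sum_single[OF assms(4,5)] by (simp add: \<mu>_def)
  then have "k * (ts_sigma T t - t0) - jump_defect_from T k t0 (ts_sigma T t)
      = (k * (t - t0) - jump_defect_from T k t0 t) + ln (1 + k * \<mu>)"
    unfolding jump_defect_def \<mu>_def by (simp add: algebra_simps)
  moreover have "exp (ln (1 + k * \<mu>)) = 1 + k * \<mu>"
    using assms(2,5) by (simp add: \<mu>_def add_pos_nonneg)
  ultimately have "ts_exp_const T k t0 (ts_sigma T t) = (1 + k * \<mu>) * ts_exp_const T k t0 t"
    using \<open>ts_sigma T t \<in> T\<close> assms(4) by (simp add: ts_exp_const_def exp_add)
  then show ?thesis by (simp add: \<mu>_def algebra_simps)
qed

lemma has_delta_derivative_ts_exp_const:
  assumes "closed T" and "k \<ge> 0" and "t0 \<in> T" and "t \<in> T"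
  shows "has_delta_derivative T (ts_exp_const T k t0) (k * ts_exp_const T k t0 t) t"
  using ts_exp_const_local[OF assms(2-4)] ts_exp_const_jump[OF assms]
  by (intro has_delta_derivative_if_linear_approx) (simp_all add: mult.assoc)

lemma delta_exp_solution_ratio_antimono:
  fixes T :: "real set" and \<psi> :: "real \<Rightarrow> real" and k t0 a b :: real
  assumes T: "closed T" and k: "k \<ge> 0" and t0: "t0 \<in> T" and ab: "a \<in> T" "b \<in> T" "a \<le> b"
    and der: "\<And>t. t \<in> ts_kappa T \<Longrightarrow> has_delta_derivative T \<psi> (k * \<psi> t) t"
  shows "\<psi> b / ts_exp_const T k t0 b \<le> \<psi> a / ts_exp_const T k t0 a"
proof -
  let ?K = "T \<inter> {a..b}"
  show ?thesis
  proof (rule ratio_antimono_delta_exp[OF T refl ab k])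
    show "ts_exp_const T k t0 t > 0" "has_delta_derivative T (ts_exp_const T k t0) (k * ts_exp_const T k t0 t) t"
      if "t \<in> ?K" for t
      using that ts_exp_const_pos has_delta_derivative_ts_exp_const[OF T k t0] by auto
  next
    fix t s assume ts: "t \<in> ?K" "s \<in> ?K" "t < s" "\<forall>r\<in>?K. t < r \<longrightarrow> s \<le> r"
    then have "t \<in> ts_kappa T" by (intro ts_kappa_if_less) auto
    then have "\<psi> (ts_sigma T t) = \<psi> t + k * \<psi> t * (ts_sigma T t - t)"
      using has_delta_derivative_at_sigma[OF der] ts(1) by auto
    then show "\<psi> s \<le> \<psi> t * (1 + k * (s - t))"
      using ts_sigma_slice_successor[OF refl ts] by (simp add: algebra_simps)
  next
    fix t \<eta> :: real assume t: "t \<in> ?K" "t \<in> closure (?K \<inter> {t<..})" and "\<eta> > 0"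
    obtain r where "r \<in> ?K" "t < r"
      using t(2) zero_less_one unfolding closure_approachable by blast
    then have "t \<in> ts_kappa T" using t(1) by (intro ts_kappa_if_less) auto
    then obtain \<delta> where "\<delta> > 0" and \<delta>: "\<forall>s\<in>T. \<bar>s - t\<bar> < \<delta> \<longrightarrow>
        \<bar>\<psi> s - \<psi> t - k * \<psi> t * (s - t)\<bar> \<le> \<eta> * \<bar>s - t\<bar>"
      using has_delta_derivative_right_dense[OF der ts_sigma_slice_right_limit[OF refl t(2)] \<open>\<eta> > 0\<close>]
      by blast
    then show "\<exists>\<delta>>0. \<forall>s\<in>?K. t < s \<and> s < t + \<delta> \<longrightarrow> \<psi> s \<le> \<psi> t * (1 + k * (s - t)) + \<eta> * (s - t)"
      by (intro exI[of _ \<delta>]) (force simp: algebra_simps)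
  next
    fix t assume t: "t \<in> ?K" "a < t" "t \<in> closure (?K \<inter> {..<t})"
    then have "t \<in> ts_kappa T" by (intro ts_kappa_if_left_limit[of _ _ ?K]) auto
    then show "(\<psi> \<longlongrightarrow> \<psi> t) (at t within ?K \<inter> {..<t})"
      using has_delta_derivative_imp_tendsto[OF der] t(1) by (auto intro: tendsto_within_subset)
  qed
qed

lemma delta_exp_solution_eq:
  fixes T :: "real set" and \<psi> :: "real \<Rightarrow> real"
  assumes T: "closed T" and k: "k \<ge> 0" and t0: "t0 \<in> T" and "t \<in> T" and "\<psi> t0 = 1"
    and der: "\<And>t. t \<in> ts_kappa T \<Longrightarrow> has_delta_derivative T \<psi> (k * \<psi> t) t"
  shows "\<psi> t = ts_exp_const T k t0 t"
proof -
  let ?e = "ts_exp_const T k t0"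
  have der_neg: "has_delta_derivative T (\<lambda>x. - \<psi> x) (k * - \<psi> t) t" if "t \<in> ts_kappa T" for t
    using has_delta_derivative_cmult[OF der[OF that], of "-1"] by simp
  have ratio_eq: "\<psi> b / ?e b = \<psi> a / ?e a" if "a \<in> T" "b \<in> T" "a \<le> b" for a b
    using delta_exp_solution_ratio_antimono[OF T k t0 that der]
      delta_exp_solution_ratio_antimono[OF T k t0 that der_neg] by simp
  have "\<psi> t / ?e t = \<psi> t0 / ?e t0"
    using ratio_eq[OF \<open>t \<in> T\<close> t0] ratio_eq[OF t0 \<open>t \<in> T\<close>] by (cases "t \<le> t0") auto
  then show ?thesis
    using ts_exp_const_start[OF t0] ts_exp_const_pos[OF \<open>t \<in> T\<close>] \<open>\<psi> t0 = 1\<close> by simp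
qed

lemma ts_exp_constant_eq:
  assumes "time_scale T" and "t0 \<in> T" and "k \<ge> 0"
  shows "ts_exp T (\<lambda>_. k) t0 = ts_exp_const T k t0"
  unfolding ts_exp_def
proof (rule the_equality)
  have "closed T" using assms(1) by (simp add: time_scale_def)
  have "\<forall>t\<in>ts_kappa T. has_delta_derivative T (ts_exp_const T k t0) (k * ts_exp_const T k t0 t) t"
    using has_delta_derivative_ts_exp_const[OF \<open>closed T\<close> assms(3,2)] ts_kappa_subset by blast
  moreover have "\<forall>t. t \<notin> T \<longrightarrow> ts_exp_const T k t0 t = 0" by (simp add: ts_exp_const_def)
  ultimately show "ts_exp_const T k t0 t0 = 1
      \<and> (\<forall>t\<in>ts_kappa T. has_delta_derivative T (ts_exp_const T k t0) (k * ts_exp_const T k t0 t) t)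
      \<and> (\<forall>t. t \<notin> T \<longrightarrow> ts_exp_const T k t0 t = 0)"
    using ts_exp_const_start[OF assms(2)] by blast
  fix \<psi> assume "\<psi> t0 = 1 \<and> (\<forall>t\<in>ts_kappa T. has_delta_derivative T \<psi> (k * \<psi> t) t)
      \<and> (\<forall>t. t \<notin> T \<longrightarrow> \<psi> t = 0)"
  then show "\<psi> = ts_exp_const T k t0"
    using delta_exp_solution_eq[OF \<open>closed T\<close> assms(3,2)] by (auto simp: ts_exp_const_def)
qed

section \<open>Second-order equations\<close>

lemma norm_second_order_step_le:
  fixes Y Y1 ys y1s p q p1 q1 d a b :: real
  assumes p: "\<bar>p\<bar> \<le> p1" and q: "\<bar>q\<bar> \<le> q1" and d: "d \<ge> 0"
    and ys: "ys = Y + Y1 * d + a" and y1s: "y1s = Y1 + (- p * Y1 - q * Y) * d + b"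
  shows "sqrt (ys\<^sup>2 + y1s\<^sup>2) \<le> sqrt (Y\<^sup>2 + Y1\<^sup>2) * (1 + (1 + p1 + q1) * d) + \<bar>a\<bar> + \<bar>b\<bar>"
proof -
  \<comment> \<open>The plane is identified with \<open>\<complex>\<close>, to use the triangle inequality for \<open>cmod\<close>.\<close>
  define z where "z = Complex Y Y1"
  define w where "w = Complex Y1 (- p * Y1 - q * Y)"
  define v where "v = Complex a b"
  have eq: "Complex ys y1s = z + of_real d * w + v"
    unfolding z_def w_def v_def ys y1s by (simp add: complex_eq_iff)
  have zY: "\<bar>Y\<bar> \<le> cmod z" "\<bar>Y1\<bar> \<le> cmod z"
    using abs_Re_le_cmod[of z] abs_Im_le_cmod[of z] z_def by auto
  have "\<bar>- p * Y1 - q * Y\<bar> \<le> \<bar>p\<bar> * \<bar>Y1\<bar> + \<bar>q\<bar> * \<bar>Y\<bar>"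
    by (metis abs_minus_cancel abs_mult abs_triangle_ineq4 mult_minus_left)
  also have "\<dots> \<le> p1 * cmod z + q1 * cmod z"
    using p q zY by (intro add_mono mult_mono) auto
  finally have A: "\<bar>- p * Y1 - q * Y\<bar> \<le> p1 * cmod z + q1 * cmod z" .
  have "cmod w \<le> \<bar>Y1\<bar> + \<bar>- p * Y1 - q * Y\<bar>" using cmod_le[of w] w_def by simp
  also have "\<dots> \<le> (1 + p1 + q1) * cmod z" using A zY by (simp add: algebra_simps)
  finally have wb: "cmod w \<le> (1 + p1 + q1) * cmod z" .
  have "cmod (Complex ys y1s) \<le> cmod z + cmod (of_real d * w) + cmod v"
    unfolding eq by (meson add_mono norm_triangle_ineq order_trans order_refl)
  also have "cmod (of_real d * w) = d * cmod w" using d by (simp add: norm_mult)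
  also have "cmod v \<le> \<bar>a\<bar> + \<bar>b\<bar>" using cmod_le[of v] v_def by simp
  also have "d * cmod w \<le> d * ((1 + p1 + q1) * cmod z)" using wb d by (intro mult_left_mono)
  finally have "cmod (Complex ys y1s) \<le> cmod z * (1 + (1 + p1 + q1) * d) + \<bar>a\<bar> + \<bar>b\<bar>"
    by (simp add: algebra_simps)
  then show ?thesis unfolding z_def complex_norm .
qed

lemma second_order_norm_jump_le:
  fixes S :: "real set" and y y1 :: "real \<Rightarrow> real"
  assumes "has_delta_derivative S y (y1 t) t" and "has_delta_derivative S y1 D t"
    and "D + p * y1 t + q * y t = 0" and "t \<in> S" and "\<bar>p\<bar> \<le> p1" and "\<bar>q\<bar> \<le> q1"
  defines "N \<equiv> \<lambda>x. sqrt ((y x)\<^sup>2 + (y1 x)\<^sup>2)"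
  shows "N (ts_sigma S t) \<le> N t * (1 + (1 + p1 + q1) * (ts_sigma S t - t))"
proof -
  have "D = - p * y1 t - q * y t" using assms(3) by linarith
  then have "y (ts_sigma S t) = y t + y1 t * (ts_sigma S t - t) + 0"
    and "y1 (ts_sigma S t) = y1 t + (- p * y1 t - q * y t) * (ts_sigma S t - t) + 0"
    using has_delta_derivative_at_sigma[OF assms(1,4)] has_delta_derivative_at_sigma[OF assms(2,4)]
    by simp_all
  from norm_second_order_step_le[OF assms(5,6) _ this] show ?thesis
    using ts_sigma_ge[of t S] by (simp add: N_def)
qed

lemma second_order_norm_right_dense_le:
  fixes S :: "real set" and y y1 :: "real \<Rightarrow> real"
  assumes "has_delta_derivative S y (y1 t) t" and "has_delta_derivative S y1 D t"
    and "D + p * y1 t + q * y t = 0" and "ts_sigma S t = t" and "\<bar>p\<bar> \<le> p1" and "\<bar>q\<bar> \<le> q1"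
    and "\<eta> > 0"
  defines "N \<equiv> \<lambda>x. sqrt ((y x)\<^sup>2 + (y1 x)\<^sup>2)"
  shows "\<exists>\<delta>>0. \<forall>s\<in>S. t < s \<and> s < t + \<delta> \<longrightarrow>
    N s \<le> N t * (1 + (1 + p1 + q1) * (s - t)) + \<eta> * (s - t)"
proof -
  have "\<eta> / 2 > 0" using \<open>\<eta> > 0\<close> by simp
  have "D = - p * y1 t - q * y t" using assms(3) by linarith
  obtain \<delta>1 where "\<delta>1 > 0" and \<delta>1: "\<forall>s\<in>S. \<bar>s - t\<bar> < \<delta>1 \<longrightarrow>
      \<bar>y s - y t - y1 t * (s - t)\<bar> \<le> \<eta> / 2 * \<bar>s - t\<bar>"
    using has_delta_derivative_right_dense[OF assms(1,4) \<open>\<eta> / 2 > 0\<close>] by blast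
  obtain \<delta>2 where "\<delta>2 > 0" and \<delta>2: "\<forall>s\<in>S. \<bar>s - t\<bar> < \<delta>2 \<longrightarrow>
      \<bar>y1 s - y1 t - (- p * y1 t - q * y t) * (s - t)\<bar> \<le> \<eta> / 2 * \<bar>s - t\<bar>"
    using has_delta_derivative_right_dense[OF assms(2,4) \<open>\<eta> / 2 > 0\<close>] \<open>D = _\<close> by blast
  have "N s \<le> N t * (1 + (1 + p1 + q1) * (s - t)) + \<eta> * (s - t)"
    if "s \<in> S" "t < s" "s < t + min \<delta>1 \<delta>2" for s
  proof -
    define a where "a = y s - y t - y1 t * (s - t)"
    define b where "b = y1 s - y1 t - (- p * y1 t - q * y t) * (s - t)"
    have "\<bar>a\<bar> \<le> \<eta> / 2 * (s - t)" "\<bar>b\<bar> \<le> \<eta> / 2 * (s - t)"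
      using \<delta>1 \<delta>2 that by (auto simp: a_def b_def)
    moreover have "N s \<le> N t * (1 + (1 + p1 + q1) * (s - t)) + \<bar>a\<bar> + \<bar>b\<bar>"
      unfolding N_def using that
      by (intro norm_second_order_step_le[OF assms(5,6)]) (auto simp: a_def b_def)
    ultimately show ?thesis by simp
  qed
  then show ?thesis using \<open>\<delta>1 > 0\<close> \<open>\<delta>2 > 0\<close> by (intro exI[of _ "min \<delta>1 \<delta>2"]) auto
qed

lemma ts_kappa2_slice:
  fixes S K :: "real set"
  assumes K: "K = S \<inter> {a..b}" and "b \<in> ts_kappa S" and "t \<in> K"
    and "t < b \<or> t \<in> closure (K \<inter> {..<t})"
  shows "t \<in> ts_kappa (ts_kappa S)"
proof -
  have K_kappa: "r \<in> ts_kappa S" if "r \<in> K" for r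
    using that assms(2) ts_kappa_if_less[of r S b] ts_kappa_subset[of S] K
    by (cases "r = b") auto
  show ?thesis
    using assms(4)
  proof
    assume "t < b"
    then show ?thesis using K_kappa[OF \<open>t \<in> K\<close>] assms(2) by (rule ts_kappa_if_less[rotated 2])
  next
    assume "t \<in> closure (K \<inter> {..<t})"
    then show ?thesis
      using K_kappa[OF \<open>t \<in> K\<close>] K_kappa by (intro ts_kappa_if_left_limit[of t "ts_kappa S" "K \<inter> {..<t}"]) auto
  qed
qed

lemma second_order_norm_le_exp:
  fixes S T :: "real set" and p q y y1 y2 :: "real \<Rightarrow> real"
  assumes "closed T" and slice: "S \<inter> {t0..t1} = T \<inter> {t0..t1}"
    and "t0 \<in> S" and "t1 \<in> ts_kappa S" and "t0 \<le> t1" and "p1 \<ge> 0" and "q1 \<ge> 0"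
    and p_bound: "\<And>t. t \<in> ts_kappa (ts_kappa S) \<Longrightarrow> t \<ge> t0 \<Longrightarrow> \<bar>p t\<bar> \<le> p1"
    and q_bound: "\<And>t. t \<in> ts_kappa (ts_kappa S) \<Longrightarrow> t \<ge> t0 \<Longrightarrow> \<bar>q t\<bar> \<le> q1"
    and dy: "\<And>t. t \<in> ts_kappa S \<Longrightarrow> has_delta_derivative S y (y1 t) t"
    and dy1: "\<And>t. t \<in> ts_kappa (ts_kappa S) \<Longrightarrow> has_delta_derivative S y1 (y2 t) t"
    and eqn: "\<And>t. t \<in> ts_kappa (ts_kappa S) \<Longrightarrow> y2 t + p t * y1 t + q t * y t = 0"
  shows "sqrt ((y t1)\<^sup>2 + (y1 t1)\<^sup>2)
    \<le> sqrt ((y t0)\<^sup>2 + (y1 t0)\<^sup>2) * ts_exp_const T (1 + p1 + q1) t0 t1"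
proof -
  define K where "K = T \<inter> {t0..t1}"
  define N where "N = (\<lambda>x. sqrt ((y x)\<^sup>2 + (y1 x)\<^sup>2))"
  let ?k = "1 + p1 + q1"
  let ?e = "ts_exp_const T ?k t0"
  have K_S: "K = S \<inter> {t0..t1}" using slice by (simp add: K_def)
  have "t0 \<in> K" "t1 \<in> K" using assms(3-5) ts_kappa_subset[of S] by (auto simp: K_S)
  then have "t0 \<in> T" "t1 \<in> T" by (simp_all add: K_def)
  have kappa2: "t \<in> ts_kappa (ts_kappa S)" "t0 \<le> t" "t \<in> S"
    if "t \<in> K" "t < t1 \<or> t \<in> closure (K \<inter> {..<t})" for t
    using ts_kappa2_slice[OF K_S assms(4) that] that(1) by (simp_all add: K_S)
  have dy_S: "has_delta_derivative S y (y1 t) t" if "t \<in> ts_kappa (ts_kappa S)" for t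
    using dy that ts_kappa_subset by blast
  have "N t1 / ?e t1 \<le> N t0 / ?e t0"
  proof (rule ratio_antimono_delta_exp[OF \<open>closed T\<close> K_def \<open>t0 \<in> T\<close> \<open>t1 \<in> T\<close> \<open>t0 \<le> t1\<close>])
    show "?k \<ge> 0" using assms(6,7) by simp
    show "?e t > 0" "has_delta_derivative T ?e (?k * ?e t) t" if "t \<in> K" for t
      using that \<open>t0 \<in> T\<close> \<open>?k \<ge> 0\<close> ts_exp_const_pos has_delta_derivative_ts_exp_const[OF \<open>closed T\<close>]
      by (auto simp: K_def)
  next
    fix t s assume ts: "t \<in> K" "s \<in> K" "t < s" "\<forall>r\<in>K. t < r \<longrightarrow> s \<le> r"
    then have "t < t1" by (auto simp: K_def)
    note t = kappa2[OF ts(1) disjI1[OF this]]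
    have "N (ts_sigma S t) \<le> N t * (1 + ?k * (ts_sigma S t - t))"
      unfolding N_def using dy_S[OF t(1)] dy1[OF t(1)] eqn[OF t(1)] t(3) p_bound[OF t(1,2)] q_bound[OF t(1,2)]
      by (rule second_order_norm_jump_le)
    then show "N s \<le> N t * (1 + ?k * (s - t))" using ts_sigma_slice_successor[OF K_S ts] by simp
  next
    fix t \<eta> :: real assume "t \<in> K" "t \<in> closure (K \<inter> {t<..})" and "\<eta> > 0"
    obtain r where "r \<in> K" "t < r"
      using \<open>t \<in> closure (K \<inter> {t<..})\<close> zero_less_one unfolding closure_approachable by blast
    then have "t < t1" by (auto simp: K_def)
    note t = kappa2[OF \<open>t \<in> K\<close> disjI1[OF this]]
    obtain \<delta> where "\<delta> > 0"
      and "\<forall>s\<in>S. t < s \<and> s < t + \<delta> \<longrightarrow> N s \<le> N t * (1 + ?k * (s - t)) + \<eta> * (s - t)"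
      unfolding N_def
      using dy_S[OF t(1)] dy1[OF t(1)] eqn[OF t(1)] ts_sigma_slice_right_limit[OF K_S \<open>t \<in> closure _\<close>]
        p_bound[OF t(1,2)] q_bound[OF t(1,2)] \<open>\<eta> > 0\<close>
      by (rule second_order_norm_right_dense_le[THEN exE]) blast
    then show "\<exists>\<delta>>0. \<forall>s\<in>K. t < s \<and> s < t + \<delta> \<longrightarrow> N s \<le> N t * (1 + ?k * (s - t)) + \<eta> * (s - t)"
      by (auto simp: K_S)
  next
    fix t assume "t \<in> K" "t0 < t" "t \<in> closure (K \<inter> {..<t})"
    note t = kappa2[OF \<open>t \<in> K\<close> disjI2[OF \<open>t \<in> closure _\<close>]]
    have "K \<inter> {..<t} \<subseteq> S" by (auto simp: K_S)
    then have "(y \<longlongrightarrow> y t) (at t within K \<inter> {..<t})" "(y1 \<longlongrightarrow> y1 t) (at t within K \<inter> {..<t})"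
      using has_delta_derivative_imp_tendsto[OF dy_S[OF t(1)] t(3)]
        has_delta_derivative_imp_tendsto[OF dy1[OF t(1)] t(3)] tendsto_within_subset by blast+
    then show "(N \<longlongrightarrow> N t) (at t within K \<inter> {..<t})"
      unfolding N_def by (intro tendsto_intros)
  qed
  then show ?thesis
    using ts_exp_const_start[OF \<open>t0 \<in> T\<close>] ts_exp_const_pos[OF \<open>t1 \<in> T\<close>]
    by (simp add: N_def divide_le_eq)
qed

theorem theorem2p4:
  fixes T I :: "real set" and t0 p1 q1 :: real and p q y y1 y2 :: "real \<Rightarrow> real"
  assumes "time_scale T"
    and "is_interval I"
    and "t0 \<in> I \<inter> T"
    and "rd_continuous_on (I \<inter> T) p"
    and "rd_continuous_on (I \<inter> T) q"
    and "p1 \<ge> 0" and "q1 \<ge> 0"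
    and "\<And>t. t \<in> ts_kappa (ts_kappa (I \<inter> T)) \<Longrightarrow> t \<ge> t0 \<Longrightarrow> \<bar>p t\<bar> \<le> p1"
    and "\<And>t. t \<in> ts_kappa (ts_kappa (I \<inter> T)) \<Longrightarrow> t \<ge> t0 \<Longrightarrow> \<bar>q t\<bar> \<le> q1"
    and "\<And>t. t \<in> ts_kappa (I \<inter> T) \<Longrightarrow> has_delta_derivative (I \<inter> T) y (y1 t) t"
    and "\<And>t. t \<in> ts_kappa (ts_kappa (I \<inter> T)) \<Longrightarrow> has_delta_derivative (I \<inter> T) y1 (y2 t) t"
    and "\<And>t. t \<in> ts_kappa (ts_kappa (I \<inter> T)) \<Longrightarrow> y2 t + p t * y1 t + q t * y t = 0"
  shows "\<forall>t\<in>ts_kappa (I \<inter> T). t \<ge> t0 \<longrightarrow>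
           sqrt ((y t)\<^sup>2 + (y1 t)\<^sup>2)
             \<le> sqrt ((y t0)\<^sup>2 + (y1 t0)\<^sup>2) * ts_exp T (\<lambda>_. 1 + p1 + q1) t0 t"
proof (intro ballI impI)
  fix t assume t: "t \<in> ts_kappa (I \<inter> T)" "t0 \<le> t"
  have "closed T" using assms(1) by (simp add: time_scale_def)
  have "t0 \<in> I" "t0 \<in> T" using assms(3) by simp_all
  have "t \<in> I" using t(1) ts_kappa_subset[of "I \<inter> T"] by blast
  have "{t0..t} \<subseteq> I"
    using mem_is_interval_1_I[OF assms(2) \<open>t0 \<in> I\<close> \<open>t \<in> I\<close>] by auto
  then have "I \<inter> T \<inter> {t0..t} = T \<inter> {t0..t}" by blast
  from second_order_norm_le_exp[OF \<open>closed T\<close> this assms(3) t assms(6-12)]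
  show "sqrt ((y t)\<^sup>2 + (y1 t)\<^sup>2) \<le> sqrt ((y t0)\<^sup>2 + (y1 t0)\<^sup>2) * ts_exp T (\<lambda>_. 1 + p1 + q1) t0 t"
    by (simp only: ts_exp_constant_eq[OF assms(1) \<open>t0 \<in> T\<close>] assms(6,7) add_nonneg_nonneg zero_le_one)
qed

end
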